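(* (i) If a predominated graph $(G,D)$ is MBD Dominator-critical and $D'\subseteq V(G)$ is a proper subset or a proper superset of $D$, then $(G,D')$ is not MBD Dominator-critical. (ii) For a graph $G$, there exists $D\subseteq V(G)$ such that $(G,D)$ is MBD Dominator-critical if and only if Staller wins the MBD game on $(G,\emptyset)$.
   Context: A predominated graph is a pair $(G,D)$ with $G$ a finite simple graph and $D\subseteq V(G)$. In the MBD game on $(G,D)$, Staller and Dominator alternately claim unclaimed vertices of $V(G)$ (including vertices of $D$), Staller first, until all are claimed; Staller wins if she claims all of $N_G[v]$ for some $v\in V(G)\setminus D$, Dominator wins otherwise. $(G,D)$ is MBD Dominator-critical if $D\neq\emptyset$, Dominator wins on $(G,D)$, and Staller wins on $(G,D\setminus\{v\})$ for every $v\in D$. *)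

theory Defs
  imports Main
begin

definition simple_graph :: "'a set \<Rightarrow> ('a \<Rightarrow> 'a \<Rightarrow> bool) \<Rightarrow> bool" where
  "simple_graph V E \<longleftrightarrow> finite V \<and> (\<forall>u v. E u v \<longrightarrow> u \<in> V \<and> v \<in> V)
     \<and> (\<forall>u v. E u v \<longrightarrow> E v u) \<and> (\<forall>v. \<not> E v v)"

definition closed_nbhd :: "'a set \<Rightarrow> ('a \<Rightarrow> 'a \<Rightarrow> bool) \<Rightarrow> 'a \<Rightarrow> 'a set" where
  "closed_nbhd V E v = insert v {u \<in> V. E v u}"

definition staller_claimed_nbhd :: "'a set \<Rightarrow> ('a \<Rightarrow> 'a \<Rightarrow> bool) \<Rightarrow> 'a set \<Rightarrow> 'a set \<Rightarrow> bool" where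
  "staller_claimed_nbhd V E D S \<longleftrightarrow> (\<exists>v \<in> V - D. closed_nbhd V E v \<subseteq> S)"

text \<open>mbd_sw n V E D S T st: Staller has a winning strategy from the position where
  Staller has claimed S, Dominator has claimed T, and it is Staller's turn iff st;
  n is a fuel bound (at least the number of unclaimed vertices).\<close>
fun mbd_sw :: "nat \<Rightarrow> 'a set \<Rightarrow> ('a \<Rightarrow> 'a \<Rightarrow> bool) \<Rightarrow> 'a set \<Rightarrow> 'a set \<Rightarrow> 'a set \<Rightarrow> bool \<Rightarrow> bool" where
  "mbd_sw 0 V E D S T st = staller_claimed_nbhd V E D S"
| "mbd_sw (Suc n) V E D S T st =
     (if V - S - T = {} then staller_claimed_nbhd V E D S
      else if st then (\<exists>u \<in> V - S - T. mbd_sw n V E D (insert u S) T False)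
      else (\<forall>u \<in> V - S - T. mbd_sw n V E D S (insert u T) True))"

definition mbd_staller_wins :: "'a set \<Rightarrow> ('a \<Rightarrow> 'a \<Rightarrow> bool) \<Rightarrow> 'a set \<Rightarrow> bool" where
  "mbd_staller_wins V E D = mbd_sw (card V) V E D {} {} True"

text \<open>The game is finite with no draws, so Dominator wins iff Staller does not.\<close>
definition mbd_dominator_wins :: "'a set \<Rightarrow> ('a \<Rightarrow> 'a \<Rightarrow> bool) \<Rightarrow> 'a set \<Rightarrow> bool" where
  "mbd_dominator_wins V E D \<longleftrightarrow> \<not> mbd_staller_wins V E D"

definition mbd_dominator_critical :: "'a set \<Rightarrow> ('a \<Rightarrow> 'a \<Rightarrow> bool) \<Rightarrow> 'a set \<Rightarrow> bool" where
  "mbd_dominator_critical V E D \<longleftrightarrow> D \<subseteq> V \<and> D \<noteq> {} \<and> mbd_dominator_wins V E D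
     \<and> (\<forall>v \<in> D. mbd_staller_wins V E (D - {v}))"

end

theory Submission
  imports Defs
begin

text \<open>Predominating more vertices only removes targets for Staller, so her wins are antitone
  in D. Hence Dominator-critical sets form an antichain, and every inclusion-minimal
  Dominator-winning subset of V is Dominator-critical. Such a set exists because D = V is
  Dominator-winning, and it is non-empty precisely when Staller wins on (G, {}).\<close>

lemma staller_claimed_nbhd_antimono:
  "staller_claimed_nbhd V E D' S \<Longrightarrow> D \<subseteq> D' \<Longrightarrow> staller_claimed_nbhd V E D S"
  unfolding staller_claimed_nbhd_def by blast

lemma mbd_sw_antimono:
  assumes "mbd_sw n V E D' S T st" and "D \<subseteq> D'"
  shows "mbd_sw n V E D S T st"
  using assms(1)
proof (induction n arbitrary: S T st)
  case 0
  then show ?case using assms(2) by (simp add: staller_claimed_nbhd_antimono)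
next
  case (Suc n)
  then show ?case
    using assms(2) by (auto simp: staller_claimed_nbhd_antimono dest: Suc.IH split: if_splits)
qed

lemma mbd_staller_wins_antimono:
  "mbd_staller_wins V E D' \<Longrightarrow> D \<subseteq> D' \<Longrightarrow> mbd_staller_wins V E D"
  unfolding mbd_staller_wins_def by (rule mbd_sw_antimono)

lemma not_mbd_staller_wins_if_subset_dom:
  assumes "V \<subseteq> D"
  shows "\<not> mbd_staller_wins V E D"
proof -
  have "\<not> mbd_sw n V E D S T st" for n S T st
    using assms by (induction n arbitrary: S T st) (auto simp: staller_claimed_nbhd_def)
  then show ?thesis unfolding mbd_staller_wins_def by blast
qed

lemma mbd_dominator_critical_not_psubset:
  assumes "mbd_dominator_critical V E D" and "mbd_dominator_critical V E D'"
  shows "\<not> D \<subset> D'"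
proof
  assume "D \<subset> D'"
  then obtain v where "v \<in> D'" and "D \<subseteq> D' - {v}" by blast
  have "mbd_staller_wins V E (D' - {v})"
    using assms(2) \<open>v \<in> D'\<close> unfolding mbd_dominator_critical_def by blast
  then have "mbd_staller_wins V E D"
    using \<open>D \<subseteq> D' - {v}\<close> by (rule mbd_staller_wins_antimono)
  with assms(1) show False
    unfolding mbd_dominator_critical_def mbd_dominator_wins_def by blast
qed

lemma mbd_staller_wins_empty_if_critical:
  assumes "mbd_dominator_critical V E D"
  shows "mbd_staller_wins V E {}"
proof -
  obtain v where "v \<in> D" and "mbd_staller_wins V E (D - {v})"
    using assms unfolding mbd_dominator_critical_def by blast
  then show ?thesis using mbd_staller_wins_antimono by blast
qed

lemma ex_mbd_dominator_critical:
  assumes "finite V" and "mbd_staller_wins V E {}"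
  shows "\<exists>D \<subseteq> V. mbd_dominator_critical V E D"
proof -
  define Dom where "Dom = {D \<in> Pow V. \<not> mbd_staller_wins V E D}"
  have "finite Dom" using assms(1) unfolding Dom_def by simp
  moreover have "V \<in> Dom"
    using not_mbd_staller_wins_if_subset_dom unfolding Dom_def by blast
  then have "Dom \<noteq> {}" by blast
  ultimately obtain D where D: "D \<in> Dom" and minimal: "\<forall>D' \<in> Dom. D' \<subseteq> D \<longrightarrow> D = D'"
    using finite_has_minimal by blast
  have "D \<subseteq> V" and dom_wins: "\<not> mbd_staller_wins V E D"
    using D unfolding Dom_def by blast+
  have "mbd_staller_wins V E (D - {v})" if "v \<in> D" for v
  proof (rule ccontr)
    assume "\<not> mbd_staller_wins V E (D - {v})"
    then have "D - {v} \<in> Dom" using \<open>D \<subseteq> V\<close> unfolding Dom_def by blast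
    then have "D = D - {v}" using minimal by blast
    with that show False by blast
  qed
  moreover have "D \<noteq> {}" using dom_wins assms(2) by blast
  ultimately show ?thesis using \<open>D \<subseteq> V\<close> dom_wins
    unfolding mbd_dominator_critical_def mbd_dominator_wins_def by blast
qed

theorem mainTheorem13:
  fixes V :: "'a set" and E :: "'a \<Rightarrow> 'a \<Rightarrow> bool"
  assumes "simple_graph V E"
  shows "(\<forall>D D'. mbd_dominator_critical V E D \<and> D' \<subseteq> V \<and> (D' \<subset> D \<or> D \<subset> D')
            \<longrightarrow> \<not> mbd_dominator_critical V E D')
       \<and> ((\<exists>D \<subseteq> V. mbd_dominator_critical V E D) \<longleftrightarrow> mbd_staller_wins V E {})"
proof (intro conjI allI impI iffI)
  fix D D'
  assume "mbd_dominator_critical V E D \<and> D' \<subseteq> V \<and> (D' \<subset> D \<or> D \<subset> D')"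
  then show "\<not> mbd_dominator_critical V E D'"
    using mbd_dominator_critical_not_psubset by blast
next
  assume "\<exists>D \<subseteq> V. mbd_dominator_critical V E D"
  then show "mbd_staller_wins V E {}"
    using mbd_staller_wins_empty_if_critical by blast
next
  assume "mbd_staller_wins V E {}"
  moreover have "finite V" using assms unfolding simple_graph_def by blast
  ultimately show "\<exists>D \<subseteq> V. mbd_dominator_critical V E D"
    by (intro ex_mbd_dominator_critical)
qed

end
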